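(* Let $n$ be even, $V=V_1\sqcup V_2$ with $|V_1|=|V_2|=n/2$, and $0\le q<p\le 1$. Consider the complete weighted graph on $V$ with $w(u,v)=p$ for distinct $u,v$ in the same block, $w(u,v)=q$ for $u,v$ in different blocks, and $w(v,v)=0$, and the cost $c(\{A,A^\complement\})=\sum_{u\in A,v\in A^\complement}w(u,v)$ of a cut. Let $P=\{A,A^\complement\}$ be a cut of $V$, and let $\alpha_i=|A\cap V_i|/|V_i|$ and $\beta_i=|A^\complement\cap V_i|/|V_i|=1-\alpha_i$ for $i=1,2$. If $\alpha_2\ge(1-2\alpha_1)q/p$, then $c(\{A\cup V_2,A^\complement\setminus V_2\})\le c(P)$. Similarly, if $\beta_2\ge(1-2\beta_1)q/p$, then $c(\{A\setminus V_2,A^\complement\cup V_2\})\le c(P)$. *)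

theory Defs
  imports Complex_Main
begin

definition sbm_weight :: "'a set \<Rightarrow> 'a set \<Rightarrow> real \<Rightarrow> real \<Rightarrow> 'a \<Rightarrow> 'a \<Rightarrow> real" where
  "sbm_weight V1 V2 p q u v =
     (if u = v then 0
      else if (u \<in> V1 \<and> v \<in> V1) \<or> (u \<in> V2 \<and> v \<in> V2) then p
      else q)"

definition cut_cost :: "('a \<Rightarrow> 'a \<Rightarrow> real) \<Rightarrow> 'a set \<Rightarrow> 'a set \<Rightarrow> real" where
  "cut_cost w V A = (\<Sum>u\<in>A. \<Sum>v\<in>V - A. w u v)"

end

theory Submission
  imports Defs
begin

text \<open>Write \<open>a\<^sub>i = |A \<inter> V\<^sub>i|\<close> and \<open>b\<^sub>i = |V\<^sub>i - A|\<close>. Counting the crossing edges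
  block by block gives \<open>c(A) = p (a\<^sub>1 b\<^sub>1 + a\<^sub>2 b\<^sub>2) + q (a\<^sub>1 b\<^sub>2 + a\<^sub>2 b\<^sub>1)\<close>, and moving all
  of \<open>V\<^sub>2\<close> into \<open>A\<close> changes the cost by
  \<open>c(A) - c(A \<union> V\<^sub>2) = b\<^sub>2 (p a\<^sub>2 - q (|V\<^sub>1| - 2 a\<^sub>1))\<close>.
  For \<open>|V\<^sub>1| = |V\<^sub>2|\<close> the hypothesis on \<open>\<alpha>\<^sub>2\<close> says exactly that the bracket is
  nonnegative. The second claim is the first one applied to the complement of \<open>A\<close>,
  since a cut costs the same seen from either side.\<close>

lemma sbm_weight_commute: "sbm_weight V1 V2 p q u v = sbm_weight V1 V2 p q v u"
  by (auto simp: sbm_weight_def)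

lemma sbm_weight_swap_blocks: "sbm_weight V2 V1 p q = sbm_weight V1 V2 p q"
  by (auto simp: sbm_weight_def fun_eq_iff)

lemma cut_cost_complement:
  assumes "\<And>u v. w u v = w v u" and "A \<subseteq> V"
  shows "cut_cost w V (V - A) = cut_cost w V A"
proof -
  have "V - (V - A) = A" using assms(2) by blast
  then have "cut_cost w V (V - A) = (\<Sum>u\<in>V - A. \<Sum>v\<in>A. w u v)"
    by (simp add: cut_cost_def)
  also have "\<dots> = (\<Sum>v\<in>A. \<Sum>u\<in>V - A. w v u)"
    by (subst sum.swap) (simp add: assms(1))
  finally show ?thesis by (simp add: cut_cost_def)
qed

lemma sum_sbm_weight_from_block:
  assumes "finite V1" "finite V2" "V1 \<inter> V2 = {}"
    and "S \<subseteq> V1 \<union> V2" "u \<in> V1" "u \<notin> S"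
  shows "(\<Sum>v\<in>S. sbm_weight V1 V2 p q u v)
           = p * card (S \<inter> V1) + q * card (S \<inter> V2)"
proof -
  have S: "S = (S \<inter> V1) \<union> (S \<inter> V2)" using assms(4) by blast
  have "(\<Sum>v\<in>S. sbm_weight V1 V2 p q u v)
          = (\<Sum>v\<in>S \<inter> V1. sbm_weight V1 V2 p q u v) + (\<Sum>v\<in>S \<inter> V2. sbm_weight V1 V2 p q u v)"
    using assms(1-3) by (subst S, subst sum.union_disjoint) auto
  also have "\<dots> = (\<Sum>v\<in>S \<inter> V1. p) + (\<Sum>v\<in>S \<inter> V2. q)"
    using assms(3,5,6) by (intro arg_cong2[where f = "(+)"] sum.cong) (auto simp: sbm_weight_def)
  finally show ?thesis by (simp add: mult.commute)
qed

lemma cut_cost_sbm_weight: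
  assumes "finite V1" "finite V2" "V1 \<inter> V2 = {}" "A \<subseteq> V1 \<union> V2"
  shows "cut_cost (sbm_weight V1 V2 p q) (V1 \<union> V2) A
    = p * (card (A \<inter> V1) * card (V1 - A) + card (A \<inter> V2) * card (V2 - A))
    + q * (card (A \<inter> V1) * card (V2 - A) + card (A \<inter> V2) * card (V1 - A))"
proof -
  let ?w = "sbm_weight V1 V2 p q" and ?B = "V1 \<union> V2 - A"
  have B: "?B \<subseteq> V1 \<union> V2" "?B \<inter> V1 = V1 - A" "?B \<inter> V2 = V2 - A" by auto
  have from_V1: "(\<Sum>v\<in>?B. ?w u v) = p * card (V1 - A) + q * card (V2 - A)"
    if "u \<in> A \<inter> V1" for u
    using sum_sbm_weight_from_block[OF assms(1-3) B(1)] that B by auto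
  have from_V2: "(\<Sum>v\<in>?B. ?w u v) = q * card (V1 - A) + p * card (V2 - A)"
    if "u \<in> A \<inter> V2" for u
    using sum_sbm_weight_from_block[of V2 V1 ?B u p q] assms that B
    by (auto simp: sbm_weight_swap_blocks Un_commute Int_commute)
  have A: "A = (A \<inter> V1) \<union> (A \<inter> V2)" using assms(4) by blast
  have "cut_cost ?w (V1 \<union> V2) A
          = (\<Sum>u\<in>A \<inter> V1. \<Sum>v\<in>?B. ?w u v) + (\<Sum>u\<in>A \<inter> V2. \<Sum>v\<in>?B. ?w u v)"
    unfolding cut_cost_def using assms(1-3) by (subst A, subst sum.union_disjoint) auto
  also have "\<dots> = card (A \<inter> V1) * (p * card (V1 - A) + q * card (V2 - A))
                 + card (A \<inter> V2) * (q * card (V1 - A) + p * card (V2 - A))"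
    using from_V1 from_V2 by simp
  finally show ?thesis by (simp add: algebra_simps)
qed

lemma cut_cost_sbm_weight_union_block_le:
  fixes p q :: real
  assumes "finite V1" "finite V2" "V1 \<inter> V2 = {}" "A \<subseteq> V1 \<union> V2"
    and "q * (card V1 - 2 * real (card (A \<inter> V1))) \<le> p * card (A \<inter> V2)"
  shows "cut_cost (sbm_weight V1 V2 p q) (V1 \<union> V2) (A \<union> V2)
           \<le> cut_cost (sbm_weight V1 V2 p q) (V1 \<union> V2) A"
proof -
  let ?c = "cut_cost (sbm_weight V1 V2 p q) (V1 \<union> V2)"
  define a1 where "a1 = real (card (A \<inter> V1))"
  define b1 where "b1 = real (card (V1 - A))"
  define a2 where "a2 = real (card (A \<inter> V2))"
  define b2 where "b2 = real (card (V2 - A))"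
  note counts = a1_def b1_def a2_def b2_def
  have "card (A \<inter> V1) + card (V1 - A) = card V1"
    using card_Int_Diff[OF assms(1), of A] by (simp add: Int_commute)
  then have V1: "real (card V1) = a1 + b1"
    unfolding counts by (metis of_nat_add)
  have union_V2: "(A \<union> V2) \<inter> V1 = A \<inter> V1" "(A \<union> V2) \<inter> V2 = V2"
       "V1 - (A \<union> V2) = V1 - A" "V2 - (A \<union> V2) = {}"
    using assms(3) by auto
  have "?c (A \<union> V2) = p * (a1 * b1) + q * (real (card V2) * b1)"
    using cut_cost_sbm_weight[of V1 V2 "A \<union> V2"] assms(1-4)
    unfolding union_V2 counts by auto
  moreover have "?c A = p * (a1 * b1 + a2 * b2) + q * (a1 * b2 + a2 * b1)"
    using cut_cost_sbm_weight[OF assms(1-4)] unfolding counts by simp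
  moreover have "card V2 = card (A \<inter> V2) + card (V2 - A)"
    using card_Int_Diff[OF assms(2), of A] by (simp add: Int_commute)
  ultimately have "?c A - ?c (A \<union> V2) = b2 * (p * a2 - q * (real (card V1) - 2 * a1))"
    unfolding V1 counts by (simp add: algebra_simps)
  moreover have "0 \<le> b2 * (p * a2 - q * (real (card V1) - 2 * a1))"
    using assms(5) unfolding counts by simp
  ultimately show ?thesis by linarith
qed

lemma ratio_threshold_iff:
  fixes m p x y q :: real
  assumes "0 < m" "0 < p"
  shows "(1 - 2 * (y / m)) * q / p \<le> x / m \<longleftrightarrow> q * (m - 2 * y) \<le> p * x"
proof -
  have "(1 - 2 * (y / m)) * q / p = q * (m - 2 * y) / (p * m)"
       "x / m = p * x / (p * m)"
    using assms by (simp_all add: field_simps)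
  moreover have "0 < p * m" using assms by simp
  ultimately show ?thesis by (simp only: divide_le_cancel) auto
qed

lemma cut_cost_sbm_weight_union_block_le_ratio:
  fixes p q :: real
  assumes "finite V1" "finite V2" "V1 \<inter> V2 = {}" "card V1 = card V2" "0 < p"
    and "A \<subseteq> V1 \<union> V2"
    and "real (card (A \<inter> V2)) / real (card V2)
           \<ge> (1 - 2 * (real (card (A \<inter> V1)) / real (card V1))) * q / p"
  shows "cut_cost (sbm_weight V1 V2 p q) (V1 \<union> V2) (A \<union> V2)
           \<le> cut_cost (sbm_weight V1 V2 p q) (V1 \<union> V2) A"
proof (cases "card V2 = 0")
  case True
  then have "V2 = {}" using assms(2) by simp
  then show ?thesis by simp
next
  case False
  then have "q * (card V1 - 2 * real (card (A \<inter> V1))) \<le> p * card (A \<inter> V2)"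
    using assms(4,5,7) ratio_threshold_iff[of "card V1" p] by simp
  then show ?thesis using cut_cost_sbm_weight_union_block_le assms(1-3,6) by blast
qed

theorem lemma3:
  fixes V1 V2 A :: "'a set" and n :: nat and p q :: real
  assumes "even n"
    and "finite V1" and "finite V2" and "V1 \<inter> V2 = {}"
    and "card V1 = n div 2" and "card V2 = n div 2"
    and "0 \<le> q" and "q < p" and "p \<le> 1"
    and "A \<subseteq> V1 \<union> V2" and "A \<noteq> {}" and "A \<noteq> V1 \<union> V2"
  shows
    "(real (card (A \<inter> V2)) / real (card V2)
        \<ge> (1 - 2 * (real (card (A \<inter> V1)) / real (card V1))) * q / p
      \<longrightarrow> cut_cost (sbm_weight V1 V2 p q) (V1 \<union> V2) (A \<union> V2)
          \<le> cut_cost (sbm_weight V1 V2 p q) (V1 \<union> V2) A)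
   \<and> (real (card ((V1 \<union> V2 - A) \<inter> V2)) / real (card V2)
        \<ge> (1 - 2 * (real (card ((V1 \<union> V2 - A) \<inter> V1)) / real (card V1))) * q / p
      \<longrightarrow> cut_cost (sbm_weight V1 V2 p q) (V1 \<union> V2) (A - V2)
          \<le> cut_cost (sbm_weight V1 V2 p q) (V1 \<union> V2) A)"
proof -
  let ?V = "V1 \<union> V2" and ?w = "sbm_weight V1 V2 p q"
  have blocks: "finite V1" "finite V2" "V1 \<inter> V2 = {}" "card V1 = card V2" "0 < p"
    using assms by auto
  have cost_compl: "cut_cost ?w ?V (?V - B) = cut_cost ?w ?V B" if "B \<subseteq> ?V" for B
    using cut_cost_complement[OF sbm_weight_commute that] .
  show ?thesis
  proof (intro conjI impI)
    assume "real (card (A \<inter> V2)) / real (card V2)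
              \<ge> (1 - 2 * (real (card (A \<inter> V1)) / real (card V1))) * q / p"
    then show "cut_cost ?w ?V (A \<union> V2) \<le> cut_cost ?w ?V A"
      by (rule cut_cost_sbm_weight_union_block_le_ratio[OF blocks assms(10)])
  next
    assume "real (card ((?V - A) \<inter> V2)) / real (card V2)
              \<ge> (1 - 2 * (real (card ((?V - A) \<inter> V1)) / real (card V1))) * q / p"
    then have "cut_cost ?w ?V ((?V - A) \<union> V2) \<le> cut_cost ?w ?V (?V - A)"
      by (rule cut_cost_sbm_weight_union_block_le_ratio[OF blocks Diff_subset])
    moreover have "A - V2 \<subseteq> ?V" "?V - (A - V2) = (?V - A) \<union> V2"
      using assms(10) by auto
    ultimately show "cut_cost ?w ?V (A - V2) \<le> cut_cost ?w ?V A"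
      using cost_compl[of "A - V2"] cost_compl[OF assms(10)] by simp
  qed
qed

end
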